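(* Let $(Y, S, A, \mathbf{X}^{P}, \mathbf{X}^{S})$ be jointly distributed random variables describing a unit drawn from an infinite population, where $Y$ is a real-valued outcome with $\mathbb{E}|Y|<\infty$, $S \in \{0,1\}$ is the survey inclusion indicator, $A \in \{1,\ldots,J\}$ is the area indicator, $\mathbf{X}^{P}$ (taking values in $\mathcal{X}^{P}$) are population covariates and $\mathbf{X}^{S}$ (taking values in $\mathcal{X}^{S}$) are survey-only covariates. Fix $j$ with $\Pr(A=j)>0$ and assume: (Sampling ignorability) $Y \perp\!\!\!\perp S \mid \mathbf{X}^{P}, A$ and $0 < \Pr(S=1 \mid \mathbf{X}^{P}, A) < 1$ for all $\mathbf{X}^{P}\in\mathcal{X}^{P}$; (Area ignorability) $Y \perp\!\!\!\perp A \mid \mathbf{X}^{P}, \mathbf{X}^{S}, S=1$ and $0 < \Pr(A=j \mid \mathbf{X}^{P}, \mathbf{X}^{S}, S=1) < 1$ for all $(\mathbf{X}^{P},\mathbf{X}^{S})\in\mathcal{X}^{P}\times\mathcal{X}^{S}$. Let $\pi_j(\mathbf{X}) = \Pr(S=1 \mid \mathbf{X}^{P}, A=j)$ and $p_j(\mathbf{X}) = \Pr(A=j \mid \mathbf{X}^{P}, \mathbf{X}^{S}, S=1)$. Then $\tau_j = \mathbb{E}[Y\mid A=j]$ satisfies $$\tau_j = \mathbb{E}\left\{ \frac{\mathbf{1}\{S=1, A=j\}}{\Pr(A=j)} \frac{Y}{\pi_j(\mathbf{X})}\, p_j(\mathbf{X}) \right\} + \mathbb{E}\left\{ \frac{\mathbf{1}\{S=1,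 A\neq j\}}{\Pr(A=j)} \frac{\Pr(A=j \mid \mathbf{X}^{P}, \mathbf{X}^{S}, S=1)}{\Pr(A\neq j \mid \mathbf{X}^{P}, \mathbf{X}^{S}, S=1)} \frac{Y}{\pi_j(\mathbf{X})} \,(1-p_j(\mathbf{X})) \right\}.$$
   Context: Notation: $\perp\!\!\!\perp$ denotes conditional independence; $\mathbf{1}\{\cdot\}$ is the indicator function; $\mathbf{X}$ is shorthand for the covariates $(\mathbf{X}^{P},\mathbf{X}^{S})$. The estimand for area $j$ is $\tau_j = \mathbb{E}[Y\mid A=j]$. *)

theory Defs
  imports "HOL-Probability.Probability"
begin

definition cond_indep ::
  "'a measure \<Rightarrow> ('a \<Rightarrow> 'b) \<Rightarrow> 'b measure \<Rightarrow> ('a \<Rightarrow> 'c) \<Rightarrow> 'c measure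
    \<Rightarrow> ('a \<Rightarrow> 'd) \<Rightarrow> 'd measure \<Rightarrow> bool" where
  "cond_indep M X MX Y MY Z MZ \<longleftrightarrow>
     (\<forall>B\<in>sets MX. \<forall>C\<in>sets MY.
        AE \<omega> in M.
          real_cond_exp M (vimage_algebra (space M) Z MZ)
             (\<lambda>w. indicator (X -` B \<inter> space M) w * indicator (Y -` C \<inter> space M) w) \<omega>
          = real_cond_exp M (vimage_algebra (space M) Z MZ) (indicator (X -` B \<inter> space M)) \<omega>
            * real_cond_exp M (vimage_algebra (space M) Z MZ) (indicator (Y -` C \<inter> space M)) \<omega>)"

end

theory Submission
  imports Defs
begin

(* Both ignorability assumptions are used through one principle: if Y is conditionally
   independent of T given Z and s(Z) is a version of Pr(T \<in> C | Z), then
   E[1{T \<in> C} G(Z, Y)] = E[s(Z) G(Z, Y)] for every nonnegative G.  The factorisation of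
   conditional expectations makes the two sides agree for G the indicator of a rectangle, and
   uniqueness of measures agreeing on a generating pi-system extends this to all G.

   Sampling ignorability (T = S, Z = (X^P, A), s = pi) turns E[1{S, A = j} g(Y) / pi_j] into
   E[1{A = j} g(Y)]; area ignorability inside the subpopulation S = 1 (T = A, Z = (X^P, X^S),
   s = p_j) turns E[1{S} p_j g(Y) / pi_j] into E[1{S, A = j} g(Y) / pi_j].  Both hold for every
   nonnegative measurable g, so taking g the positive and negative parts gives them for g(Y) = Y.
   Splitting 1{S} along A = j and A \<noteq> j yields the two terms; in the second the odds
   p_j / (1 - p_j) cancel against 1 - p_j. *)

lemma integral_uniform_measure:
  fixes f :: "'a \<Rightarrow> real"
  assumes "finite_measure M" "T \<in> sets M" "measure M T > 0" "f \<in> borel_measurable M"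
  shows "integral\<^sup>L (uniform_measure M T) f = (\<integral>x. indicator T x * f x \<partial>M) / measure M T"
proof -
  interpret finite_measure M by fact
  have T: "emeasure M T = ennreal (measure M T)"
    by (simp add: emeasure_eq_ennreal_measure)
  have "uniform_measure M T = density M (\<lambda>x. ennreal (indicator T x / measure M T))"
    unfolding uniform_measure_def T by (rule density_cong)
       (use assms in \<open>auto split: split_indicator simp: divide_ennreal divide_ennreal[of 1, simplified]\<close>)
  then show ?thesis
    using assms by (simp add: integral_density)
qed

lemma nn_integral_uniform_measure_cancel:
  assumes "emeasure M T \<noteq> 0" "emeasure M T \<noteq> \<infinity>" "T \<in> sets M"
    and "f \<in> borel_measurable M" "g \<in> borel_measurable M"
    and "(\<integral>\<^sup>+x. f x \<partial>uniform_measure M T) = (\<integral>\<^sup>+x. g x \<partial>uniform_measure M T)"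
  shows "(\<integral>\<^sup>+x. f x * indicator T x \<partial>M) = (\<integral>\<^sup>+x. g x * indicator T x \<partial>M)"
proof -
  have "(\<integral>\<^sup>+x. f x * indicator T x \<partial>M) / emeasure M T * emeasure M T
      = (\<integral>\<^sup>+x. g x * indicator T x \<partial>M) / emeasure M T * emeasure M T"
    using assms by (simp add: nn_integral_uniform_measure)
  then show ?thesis
    using assms by (simp add: ennreal_divide_times less_top)
qed

lemma weighted_integral_eq_of_nn_integral_eq:
  fixes u v Y :: "'a \<Rightarrow> real"
  assumes [measurable]: "u \<in> borel_measurable M" "v \<in> borel_measurable M" "Y \<in> borel_measurable M"
    and nonneg: "\<And>\<omega>. \<omega> \<in> space M \<Longrightarrow> 0 \<le> u \<omega> \<and> 0 \<le> v \<omega>"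
    and eq: "\<And>g::real \<Rightarrow> ennreal. g \<in> borel_measurable borel \<Longrightarrow>
         (\<integral>\<^sup>+\<omega>. ennreal (u \<omega>) * g (Y \<omega>) \<partial>M) = (\<integral>\<^sup>+\<omega>. ennreal (v \<omega>) * g (Y \<omega>) \<partial>M)"
    and v_int: "integrable M (\<lambda>\<omega>. v \<omega> * Y \<omega>)"
  shows "integrable M (\<lambda>\<omega>. u \<omega> * Y \<omega>)"
    and "(\<integral>\<omega>. u \<omega> * Y \<omega> \<partial>M) = (\<integral>\<omega>. v \<omega> * Y \<omega> \<partial>M)"
proof -
  have transfer: "(\<integral>\<^sup>+\<omega>. ennreal (u \<omega> * f (Y \<omega>)) \<partial>M) = (\<integral>\<^sup>+\<omega>. ennreal (v \<omega> * f (Y \<omega>)) \<partial>M)"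
    if [measurable]: "f \<in> borel_measurable borel" for f :: "real \<Rightarrow> real"
  proof -
    have "(\<integral>\<^sup>+\<omega>. ennreal (u \<omega> * f (Y \<omega>)) \<partial>M) = (\<integral>\<^sup>+\<omega>. ennreal (u \<omega>) * ennreal (f (Y \<omega>)) \<partial>M)"
      by (rule nn_integral_cong) (simp add: nonneg ennreal_mult')
    also have "\<dots> = (\<integral>\<^sup>+\<omega>. ennreal (v \<omega>) * ennreal (f (Y \<omega>)) \<partial>M)"
      by (rule eq) measurable
    also have "\<dots> = (\<integral>\<^sup>+\<omega>. ennreal (v \<omega> * f (Y \<omega>)) \<partial>M)"
      by (rule nn_integral_cong) (simp add: nonneg ennreal_mult')
    finally show ?thesis .
  qed
  show u_int: "integrable M (\<lambda>\<omega>. u \<omega> * Y \<omega>)"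
  proof -
    have "(\<integral>\<^sup>+\<omega>. ennreal (norm (u \<omega> * Y \<omega>)) \<partial>M) = (\<integral>\<^sup>+\<omega>. ennreal (u \<omega> * \<bar>Y \<omega>\<bar>) \<partial>M)"
      by (rule nn_integral_cong) (simp add: abs_mult nonneg)
    also have "\<dots> = (\<integral>\<^sup>+\<omega>. ennreal (v \<omega> * \<bar>Y \<omega>\<bar>) \<partial>M)"
      by (rule transfer) measurable
    also have "\<dots> = (\<integral>\<^sup>+\<omega>. ennreal (norm (v \<omega> * Y \<omega>)) \<partial>M)"
      by (rule nn_integral_cong) (simp add: abs_mult nonneg)
    finally have "(\<integral>\<^sup>+\<omega>. ennreal (norm (u \<omega> * Y \<omega>)) \<partial>M) = (\<integral>\<^sup>+\<omega>. ennreal (norm (v \<omega> * Y \<omega>)) \<partial>M)" .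
    then show ?thesis
      using v_int by (simp add: integrable_iff_bounded)
  qed
  show "(\<integral>\<omega>. u \<omega> * Y \<omega> \<partial>M) = (\<integral>\<omega>. v \<omega> * Y \<omega> \<partial>M)"
    using u_int v_int transfer[of "\<lambda>y. y"] transfer[of uminus] by (simp add: real_lebesgue_integral_def)
qed

context prob_space
begin

lemma sigma_finite_subalgebra_vimage_algebra:
  assumes "Z \<in> measurable M MZ"
  shows "sigma_finite_subalgebra M (vimage_algebra (space M) Z MZ)"
proof -
  have "subalgebra M (vimage_algebra (space M) Z MZ)"
    using assms by (auto simp: subalgebra_def sets_vimage_algebra2 measurable_def intro: measurable_sets)
  then show ?thesis
    by (intro finite_measure_subalgebra_is_sigma_finite)
       (simp add: finite_measure_subalgebra_def finite_measure_subalgebra_axioms_def finite_measure_axioms)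
qed

lemma real_cond_exp_vimage_indicator:
  assumes Z[measurable]: "Z \<in> measurable M MZ" and E: "E \<in> sets M"
    and s[measurable]: "s \<in> borel_measurable MZ"
    and s_bounds: "\<forall>\<omega>\<in>space M. 0 \<le> s (Z \<omega>) \<and> s (Z \<omega>) \<le> 1"
    and version: "\<And>D. D \<in> sets MZ \<Longrightarrow>
      (\<integral>\<omega>. (indicator E \<omega> :: real) * indicator D (Z \<omega>) \<partial>M) = (\<integral>\<omega>. s (Z \<omega>) * indicator D (Z \<omega>) \<partial>M)"
  shows "AE \<omega> in M. real_cond_exp M (vimage_algebra (space M) Z MZ) (indicator E) \<omega> = s (Z \<omega>)"
proof -
  let ?F = "vimage_algebra (space M) Z MZ"
  interpret sigma_finite_subalgebra M ?F
    by (rule sigma_finite_subalgebra_vimage_algebra[OF Z])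
  have Z_space: "Z \<in> space M \<rightarrow> space MZ"
    using Z by (auto simp: measurable_def)
  have sZ_F: "(\<lambda>\<omega>. s (Z \<omega>)) \<in> borel_measurable ?F"
    by (rule measurable_compose[OF measurable_vimage_algebra1[OF Z_space] s])
  have sZ_int: "integrable M (\<lambda>\<omega>. s (Z \<omega>))"
    by (rule Bochner_Integration.integrable_bound[where f="\<lambda>_. 1::real"])
       (simp, measurable, use s_bounds in \<open>auto intro!: AE_I2\<close>)
  show ?thesis
  proof (rule real_cond_exp_charact[OF _ _ sZ_int sZ_F])
    fix A assume "A \<in> sets ?F"
    then obtain D where D: "D \<in> sets MZ" "A = Z -` D \<inter> space M"
      using Z_space by (auto simp: sets_vimage_algebra2)
    have "(\<integral>\<omega>\<in>A. indicator E \<omega> \<partial>M) = (\<integral>\<omega>. (indicator E \<omega> :: real) * indicator D (Z \<omega>) \<partial>M)"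
      unfolding set_lebesgue_integral_def D(2)
      by (rule Bochner_Integration.integral_cong) (auto split: split_indicator)
    also have "\<dots> = (\<integral>\<omega>. s (Z \<omega>) * indicator D (Z \<omega>) \<partial>M)"
      using version D(1) .
    also have "\<dots> = (\<integral>\<omega>\<in>A. s (Z \<omega>) \<partial>M)"
      unfolding set_lebesgue_integral_def D(2)
      by (rule Bochner_Integration.integral_cong) (auto split: split_indicator)
    finally show "(\<integral>\<omega>\<in>A. indicator E \<omega> \<partial>M) = (\<integral>\<omega>\<in>A. s (Z \<omega>) \<partial>M)" .
  qed (use E in \<open>simp add: integrable_indicator_iff less_top[symmetric]\<close>)
qed

lemma integral_rectangle_cond_indep:
  fixes Y :: "'a \<Rightarrow> real"
  assumes ci: "cond_indep M Y borel T MT Z MZ"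
    and [measurable]: "Y \<in> borel_measurable M" "T \<in> measurable M MT" "Z \<in> measurable M MZ"
      "C \<in> sets MT" "s \<in> borel_measurable MZ" "D \<in> sets MZ" "B \<in> sets borel"
    and s_bounds: "\<forall>\<omega>\<in>space M. 0 \<le> s (Z \<omega>) \<and> s (Z \<omega>) \<le> 1"
    and cond_prob: "AE \<omega> in M.
      real_cond_exp M (vimage_algebra (space M) Z MZ) (indicator (T -` C \<inter> space M)) \<omega> = s (Z \<omega>)"
  shows "(\<integral>\<omega>. indicator D (Z \<omega>) * (indicator (Y -` B \<inter> space M) \<omega> * indicator (T -` C \<inter> space M) \<omega>) \<partial>M)
       = (\<integral>\<omega>. indicator D (Z \<omega>) * s (Z \<omega>) * indicator (Y -` B \<inter> space M) \<omega> \<partial>M)"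
proof -
  let ?F = "vimage_algebra (space M) Z MZ"
  let ?IY = "indicator (Y -` B \<inter> space M) :: 'a \<Rightarrow> real"
  let ?IT = "indicator (T -` C \<inter> space M) :: 'a \<Rightarrow> real"
  interpret sigma_finite_subalgebra M ?F
    by (rule sigma_finite_subalgebra_vimage_algebra) measurable
  have Z_F: "Z \<in> measurable ?F MZ"
    by (rule measurable_vimage_algebra1) (use measurable_space[OF \<open>Z \<in> measurable M MZ\<close>] in blast)
  have [measurable]: "(\<lambda>\<omega>. indicator D (Z \<omega>) :: real) \<in> borel_measurable ?F"
    "(\<lambda>\<omega>. indicator D (Z \<omega>) * s (Z \<omega>) :: real) \<in> borel_measurable ?F"
    using Z_F by measurable
  have bounded_integrable: "integrable M f"
    if "f \<in> borel_measurable M" "\<And>\<omega>. \<omega> \<in> space M \<Longrightarrow> \<bar>f \<omega>\<bar> \<le> 1" for f :: "'a \<Rightarrow> real"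
    by (rule Bochner_Integration.integrable_bound[where f="\<lambda>_. 1::real"])
       (simp, fact, use that in \<open>auto intro!: AE_I2\<close>)
  have "integrable M (\<lambda>\<omega>. indicator D (Z \<omega>) * (?IY \<omega> * ?IT \<omega>))"
    by (rule bounded_integrable) (measurable, simp add: indicator_def)
  then have "(\<integral>\<omega>. indicator D (Z \<omega>) * (?IY \<omega> * ?IT \<omega>) \<partial>M)
      = (\<integral>\<omega>. indicator D (Z \<omega>) * real_cond_exp M ?F (\<lambda>w. ?IY w * ?IT w) \<omega> \<partial>M)"
    by (rule real_cond_exp_intg(2)[symmetric]) measurable
  also have "\<dots> = (\<integral>\<omega>. indicator D (Z \<omega>) * (real_cond_exp M ?F ?IY \<omega> * s (Z \<omega>)) \<partial>M)"
  proof (rule integral_cong_AE)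
    have "AE \<omega> in M. real_cond_exp M ?F (\<lambda>w. ?IY w * ?IT w) \<omega>
        = real_cond_exp M ?F ?IY \<omega> * real_cond_exp M ?F ?IT \<omega>"
      using ci \<open>B \<in> sets borel\<close> \<open>C \<in> sets MT\<close> unfolding cond_indep_def by blast
    with cond_prob show "AE \<omega> in M. indicator D (Z \<omega>) * real_cond_exp M ?F (\<lambda>w. ?IY w * ?IT w) \<omega>
        = indicator D (Z \<omega>) * (real_cond_exp M ?F ?IY \<omega> * s (Z \<omega>))"
      by eventually_elim simp
  qed measurable
  also have "\<dots> = (\<integral>\<omega>. (indicator D (Z \<omega>) * s (Z \<omega>)) * real_cond_exp M ?F ?IY \<omega> \<partial>M)"
    by (simp add: ac_simps)
  also have "\<dots> = (\<integral>\<omega>. indicator D (Z \<omega>) * s (Z \<omega>) * ?IY \<omega> \<partial>M)"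
  proof (rule real_cond_exp_intg(2))
    show "integrable M (\<lambda>\<omega>. indicator D (Z \<omega>) * s (Z \<omega>) * ?IY \<omega>)"
      by (rule bounded_integrable) (measurable, use s_bounds in \<open>auto simp: indicator_def\<close>)
  qed measurable
  finally show ?thesis .
qed

lemma emeasure_distr_density_rectangle:
  fixes Z :: "'a \<Rightarrow> 'z" and Y :: "'a \<Rightarrow> 'y" and w :: "'a \<Rightarrow> real"
  assumes [measurable]: "Z \<in> measurable M MZ" "Y \<in> measurable M MY" "w \<in> borel_measurable M"
      "D \<in> sets MZ" "B \<in> sets MY"
    and w_bounds: "\<And>\<omega>. \<omega> \<in> space M \<Longrightarrow> 0 \<le> w \<omega> \<and> w \<omega> \<le> 1"
  shows "emeasure (distr (density M (\<lambda>\<omega>. ennreal (w \<omega>))) (MZ \<Otimes>\<^sub>M MY) (\<lambda>\<omega>. (Z \<omega>, Y \<omega>))) (D \<times> B)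
       = ennreal (\<integral>\<omega>. indicator D (Z \<omega>) * w \<omega> * indicator (Y -` B \<inter> space M) \<omega> \<partial>M)"
proof -
  have "emeasure (distr (density M (\<lambda>\<omega>. ennreal (w \<omega>))) (MZ \<Otimes>\<^sub>M MY) (\<lambda>\<omega>. (Z \<omega>, Y \<omega>))) (D \<times> B)
      = (\<integral>\<^sup>+\<omega>. ennreal (indicator D (Z \<omega>) * w \<omega> * indicator (Y -` B \<inter> space M) \<omega>) \<partial>M)"
    by (simp add: emeasure_distr emeasure_density nn_integral_set_ennreal[symmetric])
       (auto intro!: nn_integral_cong split: split_indicator)
  also have "\<dots> = ennreal (\<integral>\<omega>. indicator D (Z \<omega>) * w \<omega> * indicator (Y -` B \<inter> space M) \<omega> \<partial>M)"
  proof (rule nn_integral_eq_integral)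
    show "integrable M (\<lambda>\<omega>. indicator D (Z \<omega>) * w \<omega> * indicator (Y -` B \<inter> space M) \<omega>)"
      by (rule Bochner_Integration.integrable_bound[where f="\<lambda>_. 1::real"])
         (simp, measurable, use w_bounds in \<open>auto intro!: AE_I2 simp: indicator_def\<close>)
  qed (use w_bounds in \<open>auto intro!: AE_I2\<close>)
  finally show ?thesis .
qed

lemma nn_integral_weight_eq_on_rectangles:
  fixes Z :: "'a \<Rightarrow> 'z" and Y :: "'a \<Rightarrow> 'y" and w w' :: "'a \<Rightarrow> real"
  assumes [measurable]: "Z \<in> measurable M MZ" "Y \<in> measurable M MY"
      "w \<in> borel_measurable M" "w' \<in> borel_measurable M" "G \<in> borel_measurable (MZ \<Otimes>\<^sub>M MY)"
    and bounds: "\<And>\<omega>. \<omega> \<in> space M \<Longrightarrow> 0 \<le> w \<omega> \<and> w \<omega> \<le> 1 \<and> 0 \<le> w' \<omega> \<and> w' \<omega> \<le> 1"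
    and rectangles: "\<And>D B. D \<in> sets MZ \<Longrightarrow> B \<in> sets MY \<Longrightarrow>
      (\<integral>\<omega>. indicator D (Z \<omega>) * w \<omega> * indicator (Y -` B \<inter> space M) \<omega> \<partial>M)
      = (\<integral>\<omega>. indicator D (Z \<omega>) * w' \<omega> * indicator (Y -` B \<inter> space M) \<omega> \<partial>M)"
  shows "(\<integral>\<^sup>+\<omega>. ennreal (w \<omega>) * G (Z \<omega>, Y \<omega>) \<partial>M) = (\<integral>\<^sup>+\<omega>. ennreal (w' \<omega>) * G (Z \<omega>, Y \<omega>) \<partial>M)"
proof -
  define \<nu> where "\<nu> v = distr (density M (\<lambda>\<omega>. ennreal (v \<omega>))) (MZ \<Otimes>\<^sub>M MY) (\<lambda>\<omega>. (Z \<omega>, Y \<omega>))"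
    for v :: "'a \<Rightarrow> real"
  have \<nu>_nn_integral: "integral\<^sup>N (\<nu> v) G = (\<integral>\<^sup>+\<omega>. ennreal (v \<omega>) * G (Z \<omega>, Y \<omega>) \<partial>M)"
    if [measurable]: "v \<in> borel_measurable M" for v
    unfolding \<nu>_def by (simp add: nn_integral_distr nn_integral_density)
  have \<nu>_eq: "\<nu> w = \<nu> w'"
  proof (rule measure_eqI_generator_eq[OF Int_stable_pair_measure_generator pair_measure_closed])
    fix X :: "('z \<times> 'y) set"
    assume "X \<in> {a \<times> b |a b. a \<in> sets MZ \<and> b \<in> sets MY}"
    then obtain D B where [measurable]: "D \<in> sets MZ" "B \<in> sets MY" and X: "X = D \<times> B"
      by blast
    show "emeasure (\<nu> w) X = emeasure (\<nu> w') X"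
      unfolding X \<nu>_def using rectangles bounds
      by (subst (1 2) emeasure_distr_density_rectangle) auto
  next
    show "emeasure (\<nu> w) (space MZ \<times> space MY) \<noteq> \<infinity>" for i :: nat
      unfolding \<nu>_def using bounds by (subst emeasure_distr_density_rectangle) auto
    show "range (\<lambda>i. space MZ \<times> space MY) \<subseteq> {a \<times> b |a b. a \<in> sets MZ \<and> b \<in> sets MY}"
      by blast
  qed (auto simp: \<nu>_def sets_pair_measure)
  have "(\<integral>\<^sup>+\<omega>. ennreal (w \<omega>) * G (Z \<omega>, Y \<omega>) \<partial>M) = integral\<^sup>N (\<nu> w) G"
    by (rule \<nu>_nn_integral[symmetric]) measurable
  also have "\<dots> = integral\<^sup>N (\<nu> w') G"
    by (simp only: \<nu>_eq)
  also have "\<dots> = (\<integral>\<^sup>+\<omega>. ennreal (w' \<omega>) * G (Z \<omega>, Y \<omega>) \<partial>M)"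
    by (rule \<nu>_nn_integral) measurable
  finally show ?thesis .
qed

lemma nn_integral_indicator_cond_indep:
  fixes Y :: "'a \<Rightarrow> real" and s :: "'z \<Rightarrow> real"
  assumes ci: "cond_indep M Y borel T MT Z MZ"
    and [measurable]: "Y \<in> borel_measurable M" "T \<in> measurable M MT" "Z \<in> measurable M MZ"
      "C \<in> sets MT" "s \<in> borel_measurable MZ" "G \<in> borel_measurable (MZ \<Otimes>\<^sub>M borel)"
    and s_bounds: "\<forall>\<omega>\<in>space M. 0 \<le> s (Z \<omega>) \<and> s (Z \<omega>) \<le> 1"
    and version: "\<forall>D\<in>sets MZ. measure M {\<omega>\<in>space M. T \<omega> \<in> C \<and> Z \<omega> \<in> D}
                                = (\<integral>\<omega>. s (Z \<omega>) * indicator D (Z \<omega>) \<partial>M)"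
  shows "(\<integral>\<^sup>+\<omega>. indicator C (T \<omega>) * G (Z \<omega>, Y \<omega>) \<partial>M) = (\<integral>\<^sup>+\<omega>. ennreal (s (Z \<omega>)) * G (Z \<omega>, Y \<omega>) \<partial>M)"
proof -
  let ?E = "T -` C \<inter> space M"
  have [measurable]: "?E \<in> sets M"
    by measurable
  have cond_prob: "AE \<omega> in M.
      real_cond_exp M (vimage_algebra (space M) Z MZ) (indicator ?E) \<omega> = s (Z \<omega>)"
  proof (rule real_cond_exp_vimage_indicator)
    fix D assume [measurable]: "D \<in> sets MZ"
    have "(\<integral>\<omega>. (indicator ?E \<omega> :: real) * indicator D (Z \<omega>) \<partial>M)
        = (\<integral>\<omega>. indicator {\<omega>\<in>space M. T \<omega> \<in> C \<and> Z \<omega> \<in> D} \<omega> \<partial>M)"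
      by (rule Bochner_Integration.integral_cong) (auto split: split_indicator)
    also have "\<dots> = measure M {\<omega>\<in>space M. T \<omega> \<in> C \<and> Z \<omega> \<in> D}"
      by (simp add: Int_absorb2 subset_iff)
    also have "\<dots> = (\<integral>\<omega>. s (Z \<omega>) * indicator D (Z \<omega>) \<partial>M)"
      using version \<open>D \<in> sets MZ\<close> by blast
    finally show "(\<integral>\<omega>. (indicator ?E \<omega> :: real) * indicator D (Z \<omega>) \<partial>M)
        = (\<integral>\<omega>. s (Z \<omega>) * indicator D (Z \<omega>) \<partial>M)" .
  qed (use s_bounds in auto)
  have "(\<integral>\<^sup>+\<omega>. indicator C (T \<omega>) * G (Z \<omega>, Y \<omega>) \<partial>M)
      = (\<integral>\<^sup>+\<omega>. ennreal (indicator ?E \<omega>) * G (Z \<omega>, Y \<omega>) \<partial>M)"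
    by (rule nn_integral_cong) (simp split: split_indicator)
  also have "\<dots> = (\<integral>\<^sup>+\<omega>. ennreal (s (Z \<omega>)) * G (Z \<omega>, Y \<omega>) \<partial>M)"
  proof (rule nn_integral_weight_eq_on_rectangles)
    fix D B assume "D \<in> sets MZ" "B \<in> sets (borel :: real measure)"
    with integral_rectangle_cond_indep[OF ci _ _ _ _ _ _ _ s_bounds cond_prob]
    show "(\<integral>\<omega>. indicator D (Z \<omega>) * indicator ?E \<omega> * indicator (Y -` B \<inter> space M) \<omega> \<partial>M)
        = (\<integral>\<omega>. indicator D (Z \<omega>) * s (Z \<omega>) * indicator (Y -` B \<inter> space M) \<omega> \<partial>M)"
      by (simp add: ac_simps)
  qed (use s_bounds in \<open>auto split: split_indicator\<close>)
  finally show ?thesis .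
qed

end

lemma mult_odds_mult_complement:
  fixes x :: "'a :: field"
  assumes "x \<noteq> 1"
  shows "a * (x / (1 - x)) * b * (1 - x) = a * b * x"
  using assms by (simp add: field_simps)

locale sampling_and_area_ignorability = prob_space M
  for M :: "'a measure" and MP :: "'p measure" and MS :: "'s measure"
    and Y :: "'a \<Rightarrow> real" and S :: "'a \<Rightarrow> bool" and A :: "'a \<Rightarrow> nat"
    and XP :: "'a \<Rightarrow> 'p" and XS :: "'a \<Rightarrow> 's"
    and J j :: nat
    and piS :: "'p \<times> nat \<Rightarrow> real" and p :: "'p \<times> 's \<Rightarrow> real" +
  assumes Y_int: "integrable M Y"
    and S_meas[measurable]: "S \<in> measurable M (count_space UNIV)"
    and A_meas[measurable]: "A \<in> measurable M (count_space UNIV)"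
    and A_range: "\<forall>\<omega>\<in>space M. A \<omega> \<in> {1..J}"
    and XP_meas[measurable]: "XP \<in> measurable M MP"
    and XS_meas[measurable]: "XS \<in> measurable M MS"
    and j: "j \<in> {1..J}"
    and samp_ci: "cond_indep M Y borel S (count_space UNIV)
                    (\<lambda>\<omega>. (XP \<omega>, A \<omega>)) (MP \<Otimes>\<^sub>M count_space UNIV)"
    and area_ci: "cond_indep (uniform_measure M {\<omega>\<in>space M. S \<omega>}) Y borel A (count_space UNIV)
                    (\<lambda>\<omega>. (XP \<omega>, XS \<omega>)) (MP \<Otimes>\<^sub>M MS)"
    and piS_meas[measurable]: "piS \<in> borel_measurable (MP \<Otimes>\<^sub>M count_space UNIV)"
    and piS_cond: "\<forall>C\<in>sets (MP \<Otimes>\<^sub>M count_space UNIV).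
        measure M {\<omega>\<in>space M. S \<omega> \<and> (XP \<omega>, A \<omega>) \<in> C}
        = (\<integral>\<omega>. piS (XP \<omega>, A \<omega>) * indicator C (XP \<omega>, A \<omega>) \<partial>M)"
    and piS_pos: "\<forall>xp\<in>space MP. \<forall>a\<in>{1..J}. 0 < piS (xp, a) \<and> piS (xp, a) < 1"
    and p_meas[measurable]: "p \<in> borel_measurable (MP \<Otimes>\<^sub>M MS)"
    and p_cond: "\<forall>C\<in>sets (MP \<Otimes>\<^sub>M MS).
        measure M {\<omega>\<in>space M. S \<omega> \<and> A \<omega> = j \<and> (XP \<omega>, XS \<omega>) \<in> C}
        = (\<integral>\<omega>. indicator {\<omega>\<in>space M. S \<omega>} \<omega> * p (XP \<omega>, XS \<omega>)
                 * indicator C (XP \<omega>, XS \<omega>) \<partial>M)"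
    and p_pos: "\<forall>z\<in>space (MP \<Otimes>\<^sub>M MS). 0 < p z \<and> p z < 1"
begin

lemma Y_meas[measurable]: "Y \<in> borel_measurable M"
  using Y_int by (rule borel_measurable_integrable)

lemma piS_bounds:
  assumes "\<omega> \<in> space M" "a \<in> {1..J}"
  shows "0 < piS (XP \<omega>, a) \<and> piS (XP \<omega>, a) < 1"
  using assms piS_pos measurable_space[OF XP_meas] by blast

lemma p_bounds:
  assumes "\<omega> \<in> space M"
  shows "0 < p (XP \<omega>, XS \<omega>) \<and> p (XP \<omega>, XS \<omega>) < 1"
  using assms p_pos measurable_space[OF XP_meas] measurable_space[OF XS_meas]
  by (auto simp: space_pair_measure)

lemma sampling_step:
  assumes [measurable]: "g \<in> borel_measurable borel"
  shows "(\<integral>\<^sup>+\<omega>. ennreal (indicator {\<omega>\<in>space M. S \<omega> \<and> A \<omega> = j} \<omega> / piS (XP \<omega>, j)) * g (Y \<omega>) \<partial>M)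
       = (\<integral>\<^sup>+\<omega>. indicator {\<omega>\<in>space M. A \<omega> = j} \<omega> * g (Y \<omega>) \<partial>M)"
proof -
  define G where "G x = ennreal (indicator {j} (snd (fst x)) / piS (fst (fst x), j)) * g (snd x)"
    for x :: "('p \<times> nat) \<times> real"
  have [measurable]: "(\<lambda>x. indicator {j} (snd (fst x)) :: real)
      \<in> borel_measurable ((MP \<Otimes>\<^sub>M count_space UNIV) \<Otimes>\<^sub>M borel)"
    by (rule measurable_compose[OF _ borel_measurable_count_space]) measurable
  then have [measurable]: "G \<in> borel_measurable ((MP \<Otimes>\<^sub>M count_space UNIV) \<Otimes>\<^sub>M borel)"
    unfolding G_def by measurable
  have "(\<integral>\<^sup>+\<omega>. ennreal (indicator {\<omega>\<in>space M. S \<omega> \<and> A \<omega> = j} \<omega> / piS (XP \<omega>, j)) * g (Y \<omega>) \<partial>M)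
      = (\<integral>\<^sup>+\<omega>. indicator {True} (S \<omega>) * G ((XP \<omega>, A \<omega>), Y \<omega>) \<partial>M)"
    by (rule nn_integral_cong) (auto simp: G_def split: split_indicator)
  also have "\<dots> = (\<integral>\<^sup>+\<omega>. ennreal (piS (XP \<omega>, A \<omega>)) * G ((XP \<omega>, A \<omega>), Y \<omega>) \<partial>M)"
  proof (rule nn_integral_indicator_cond_indep[OF samp_ci])
    show "\<forall>\<omega>\<in>space M. 0 \<le> piS (XP \<omega>, A \<omega>) \<and> piS (XP \<omega>, A \<omega>) \<le> 1"
      using piS_bounds A_range by (auto intro: less_imp_le)
    show "\<forall>D\<in>sets (MP \<Otimes>\<^sub>M count_space UNIV).
        measure M {\<omega>\<in>space M. S \<omega> \<in> {True} \<and> (XP \<omega>, A \<omega>) \<in> D}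
        = (\<integral>\<omega>. piS (XP \<omega>, A \<omega>) * indicator D (XP \<omega>, A \<omega>) \<partial>M)"
      using piS_cond by simp
  qed measurable
  also have "\<dots> = (\<integral>\<^sup>+\<omega>. indicator {\<omega>\<in>space M. A \<omega> = j} \<omega> * g (Y \<omega>) \<partial>M)"
  proof (rule nn_integral_cong)
    fix \<omega> assume "\<omega> \<in> space M"
    then have "0 < piS (XP \<omega>, j)"
      using piS_bounds j by blast
    then show "ennreal (piS (XP \<omega>, A \<omega>)) * G ((XP \<omega>, A \<omega>), Y \<omega>)
        = indicator {\<omega>\<in>space M. A \<omega> = j} \<omega> * g (Y \<omega>)"
      using \<open>\<omega> \<in> space M\<close>
      by (auto simp: G_def mult.assoc[symmetric] ennreal_mult[symmetric] split: split_indicator)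
  qed
  finally show ?thesis .
qed

lemma sampled_prob_pos: "0 < measure M {\<omega>\<in>space M. S \<omega>}"
proof -
  have Z_space: "(XP \<omega>, A \<omega>) \<in> space (MP \<Otimes>\<^sub>M count_space UNIV)" if "\<omega> \<in> space M" for \<omega>
    using measurable_space[OF XP_meas that] by (simp add: space_pair_measure)
  have pos: "0 < piS (XP \<omega>, A \<omega>)" if "\<omega> \<in> space M" for \<omega>
    using piS_bounds A_range that by blast
  have integrable: "integrable M (\<lambda>\<omega>. piS (XP \<omega>, A \<omega>))"
    by (rule Bochner_Integration.integrable_bound[where f="\<lambda>_. 1::real"])
       (simp, measurable, use piS_bounds A_range in \<open>force intro!: AE_I2\<close>)
  have "measure M {\<omega>\<in>space M. S \<omega>} = (\<integral>\<omega>. piS (XP \<omega>, A \<omega>) \<partial>M)"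
    using piS_cond[rule_format, OF sets.top] Z_space
    by (simp cong: Bochner_Integration.integral_cong conj_cong)
  moreover have "(\<integral>\<omega>. piS (XP \<omega>, A \<omega>) \<partial>M) \<noteq> 0"
  proof
    assume "(\<integral>\<omega>. piS (XP \<omega>, A \<omega>) \<partial>M) = 0"
    moreover have "AE \<omega> in M. 0 \<le> piS (XP \<omega>, A \<omega>)"
      using pos by (auto intro!: AE_I2 less_imp_le)
    ultimately have "AE \<omega> in M. piS (XP \<omega>, A \<omega>) = 0"
      using integral_nonneg_eq_0_iff_AE[OF integrable] by simp
    moreover have "AE \<omega> in M. piS (XP \<omega>, A \<omega>) \<noteq> 0"
      using pos by (auto intro!: AE_I2 dest: less_imp_neq[symmetric])
    ultimately have "AE \<omega> in M. False"
      by eventually_elim simp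
    then show False
      by (simp add: AE_False)
  qed
  ultimately show ?thesis
    using measure_nonneg[of M "{\<omega>\<in>space M. S \<omega>}"] by linarith
qed

lemma emeasure_sampled:
  "emeasure M {\<omega>\<in>space M. S \<omega>} \<noteq> 0" "emeasure M {\<omega>\<in>space M. S \<omega>} \<noteq> \<infinity>"
  using sampled_prob_pos by (auto simp: emeasure_eq_ennreal_measure)

lemma area_prob_in_sample:
  assumes [measurable]: "D \<in> sets (MP \<Otimes>\<^sub>M MS)"
  defines "N \<equiv> uniform_measure M {\<omega>\<in>space M. S \<omega>}"
  shows "measure N {\<omega>\<in>space N. A \<omega> \<in> {j} \<and> (XP \<omega>, XS \<omega>) \<in> D}
       = (\<integral>\<omega>. p (XP \<omega>, XS \<omega>) * indicator D (XP \<omega>, XS \<omega>) \<partial>N)"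
proof -
  let ?R = "{\<omega>\<in>space M. S \<omega>}"
  have "measure N {\<omega>\<in>space N. A \<omega> \<in> {j} \<and> (XP \<omega>, XS \<omega>) \<in> D}
      = measure N {\<omega>\<in>space M. A \<omega> = j \<and> (XP \<omega>, XS \<omega>) \<in> D}"
    by (simp add: N_def)
  also have "\<dots> = measure M (?R \<inter> {\<omega>\<in>space M. A \<omega> = j \<and> (XP \<omega>, XS \<omega>) \<in> D}) / measure M ?R"
    unfolding N_def by (rule measure_uniform_measure[OF emeasure_sampled]) measurable
  also have "\<dots> = measure M {\<omega>\<in>space M. S \<omega> \<and> A \<omega> = j \<and> (XP \<omega>, XS \<omega>) \<in> D} / measure M ?R"
    by (rule arg_cong[where f="\<lambda>X. measure M X / measure M ?R"]) blast
  also have "\<dots> = (\<integral>\<omega>. indicator ?R \<omega> * (p (XP \<omega>, XS \<omega>) * indicator D (XP \<omega>, XS \<omega>)) \<partial>M) / measure M ?R"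
    using p_cond \<open>D \<in> sets (MP \<Otimes>\<^sub>M MS)\<close> by (simp add: mult.assoc)
  also have "\<dots> = (\<integral>\<omega>. p (XP \<omega>, XS \<omega>) * indicator D (XP \<omega>, XS \<omega>) \<partial>N)"
    unfolding N_def by (rule integral_uniform_measure[symmetric])
      (use sampled_prob_pos in \<open>auto simp: finite_measure_axioms\<close>)
  finally show ?thesis .
qed

lemma area_step:
  assumes [measurable]: "g \<in> borel_measurable borel"
  shows "(\<integral>\<^sup>+\<omega>. ennreal (indicator {\<omega>\<in>space M. S \<omega>} \<omega> * p (XP \<omega>, XS \<omega>) / piS (XP \<omega>, j)) * g (Y \<omega>) \<partial>M)
       = (\<integral>\<^sup>+\<omega>. ennreal (indicator {\<omega>\<in>space M. S \<omega> \<and> A \<omega> = j} \<omega> / piS (XP \<omega>, j)) * g (Y \<omega>) \<partial>M)"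
proof -
  let ?R = "{\<omega>\<in>space M. S \<omega>}"
  let ?N = "uniform_measure M ?R"
  have [measurable]: "?R \<in> sets M"
    by measurable
  interpret N: prob_space ?N
    by (rule prob_space_uniform_measure[OF emeasure_sampled])
  define G where "G x = ennreal (1 / piS (fst (fst x), j)) * g (snd x)" for x :: "('p \<times> 's) \<times> real"
  have [measurable]: "G \<in> borel_measurable ((MP \<Otimes>\<^sub>M MS) \<Otimes>\<^sub>M borel)"
    unfolding G_def by measurable
  have in_sample: "(\<integral>\<^sup>+\<omega>. indicator {j} (A \<omega>) * G ((XP \<omega>, XS \<omega>), Y \<omega>) \<partial>?N)
      = (\<integral>\<^sup>+\<omega>. ennreal (p (XP \<omega>, XS \<omega>)) * G ((XP \<omega>, XS \<omega>), Y \<omega>) \<partial>?N)"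
  proof (rule N.nn_integral_indicator_cond_indep[OF area_ci])
    show "\<forall>\<omega>\<in>space ?N. 0 \<le> p (XP \<omega>, XS \<omega>) \<and> p (XP \<omega>, XS \<omega>) \<le> 1"
      using p_bounds by (auto intro: less_imp_le)
    show "\<forall>D\<in>sets (MP \<Otimes>\<^sub>M MS). measure ?N {\<omega>\<in>space ?N. A \<omega> \<in> {j} \<and> (XP \<omega>, XS \<omega>) \<in> D}
        = (\<integral>\<omega>. p (XP \<omega>, XS \<omega>) * indicator D (XP \<omega>, XS \<omega>) \<partial>?N)"
      using area_prob_in_sample by simp
  qed measurable
  have [measurable]: "(\<lambda>\<omega>. indicator {j} (A \<omega>) :: ennreal) \<in> borel_measurable M"
    by (rule measurable_compose[OF A_meas borel_measurable_count_space])
  have "(\<integral>\<^sup>+\<omega>. indicator {j} (A \<omega>) * G ((XP \<omega>, XS \<omega>), Y \<omega>) * indicator ?R \<omega> \<partial>M)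
      = (\<integral>\<^sup>+\<omega>. ennreal (p (XP \<omega>, XS \<omega>)) * G ((XP \<omega>, XS \<omega>), Y \<omega>) * indicator ?R \<omega> \<partial>M)"
    by (rule nn_integral_uniform_measure_cancel[OF emeasure_sampled _ _ _ in_sample]) measurable
  moreover have "ennreal (indicator ?R \<omega> * p (XP \<omega>, XS \<omega>) / piS (XP \<omega>, j)) * g (Y \<omega>)
      = ennreal (p (XP \<omega>, XS \<omega>)) * G ((XP \<omega>, XS \<omega>), Y \<omega>) * indicator ?R \<omega>"
    and "ennreal (indicator {\<omega>\<in>space M. S \<omega> \<and> A \<omega> = j} \<omega> / piS (XP \<omega>, j)) * g (Y \<omega>)
      = indicator {j} (A \<omega>) * G ((XP \<omega>, XS \<omega>), Y \<omega>) * indicator ?R \<omega>"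
    if "\<omega> \<in> space M" for \<omega>
    using p_bounds[OF that]
    by (auto simp: G_def ennreal_mult'[symmetric] mult.assoc[symmetric] split: split_indicator)
  ultimately show ?thesis
    by (simp cong: nn_integral_cong)
qed

lemma area_mean_reweighting:
  "(\<integral>\<omega>. Y \<omega> * indicator {\<omega>\<in>space M. A \<omega> = j} \<omega> \<partial>M)
   = (\<integral>\<omega>. indicator {\<omega>\<in>space M. S \<omega> \<and> A \<omega> = j} \<omega> * (Y \<omega> / piS (XP \<omega>, j)) * p (XP \<omega>, XS \<omega>) \<partial>M)
   + (\<integral>\<omega>. indicator {\<omega>\<in>space M. S \<omega> \<and> A \<omega> \<noteq> j} \<omega> * (Y \<omega> / piS (XP \<omega>, j)) * p (XP \<omega>, XS \<omega>) \<partial>M)"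
proof -
  define w_area :: "'a \<Rightarrow> real" where "w_area \<omega> = indicator {\<omega>\<in>space M. A \<omega> = j} \<omega>" for \<omega>
  define w_sample where "w_sample \<omega> = indicator {\<omega>\<in>space M. S \<omega> \<and> A \<omega> = j} \<omega> / piS (XP \<omega>, j)" for \<omega>
  define w_model where "w_model \<omega> = indicator {\<omega>\<in>space M. S \<omega>} \<omega> * p (XP \<omega>, XS \<omega>) / piS (XP \<omega>, j)" for \<omega>
  have w_meas[measurable]: "w_area \<in> borel_measurable M" "w_sample \<in> borel_measurable M"
    "w_model \<in> borel_measurable M"
    unfolding w_area_def w_sample_def w_model_def by measurable
  have piS_j: "0 < piS (XP \<omega>, j)" if "\<omega> \<in> space M" for \<omega>
    using piS_bounds[OF that j] by blast
  have nonneg: "0 \<le> w_area \<omega>" "0 \<le> w_sample \<omega>" "0 \<le> w_model \<omega>" if "\<omega> \<in> space M" for \<omega>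
    using piS_j[OF that] p_bounds[OF that] by (auto simp: w_area_def w_sample_def w_model_def)
  have area_int: "integrable M (\<lambda>\<omega>. w_area \<omega> * Y \<omega>)"
    using integrable_mult_indicator[OF _ Y_int, of "{\<omega>\<in>space M. A \<omega> = j}"] by (simp add: w_area_def)
  have sample_nn: "(\<integral>\<^sup>+\<omega>. ennreal (w_sample \<omega>) * g (Y \<omega>) \<partial>M) = (\<integral>\<^sup>+\<omega>. ennreal (w_area \<omega>) * g (Y \<omega>) \<partial>M)"
    if "g \<in> borel_measurable borel" for g
    using sampling_step[OF that] by (simp add: w_sample_def w_area_def ennreal_indicator)
  have model_nn: "(\<integral>\<^sup>+\<omega>. ennreal (w_model \<omega>) * g (Y \<omega>) \<partial>M) = (\<integral>\<^sup>+\<omega>. ennreal (w_sample \<omega>) * g (Y \<omega>) \<partial>M)"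
    if "g \<in> borel_measurable borel" for g
    using area_step[OF that] by (simp add: w_sample_def w_model_def)
  have sample_int: "integrable M (\<lambda>\<omega>. w_sample \<omega> * Y \<omega>)"
    and sample_eq: "(\<integral>\<omega>. w_sample \<omega> * Y \<omega> \<partial>M) = (\<integral>\<omega>. w_area \<omega> * Y \<omega> \<partial>M)"
    using weighted_integral_eq_of_nn_integral_eq[OF w_meas(2,1) Y_meas _ sample_nn area_int] nonneg
    by auto
  have model_int: "integrable M (\<lambda>\<omega>. w_model \<omega> * Y \<omega>)"
    and model_eq: "(\<integral>\<omega>. w_model \<omega> * Y \<omega> \<partial>M) = (\<integral>\<omega>. w_sample \<omega> * Y \<omega> \<partial>M)"
    using weighted_integral_eq_of_nn_integral_eq[OF w_meas(3,2) Y_meas _ model_nn sample_int] nonneg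
    by auto
  have "(\<integral>\<omega>. Y \<omega> * indicator {\<omega>\<in>space M. A \<omega> = j} \<omega> \<partial>M) = (\<integral>\<omega>. w_model \<omega> * Y \<omega> \<partial>M)"
    using sample_eq model_eq by (simp add: w_area_def mult.commute)
  also have "\<dots> = (\<integral>\<omega>. indicator {\<omega>\<in>space M. A \<omega> = j} \<omega> * (w_model \<omega> * Y \<omega>)
                      + indicator {\<omega>\<in>space M. A \<omega> \<noteq> j} \<omega> * (w_model \<omega> * Y \<omega>) \<partial>M)"
    by (rule Bochner_Integration.integral_cong) (auto split: split_indicator)
  also have "\<dots> = (\<integral>\<omega>. indicator {\<omega>\<in>space M. A \<omega> = j} \<omega> * (w_model \<omega> * Y \<omega>) \<partial>M)
                 + (\<integral>\<omega>. indicator {\<omega>\<in>space M. A \<omega> \<noteq> j} \<omega> * (w_model \<omega> * Y \<omega>) \<partial>M)"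
    using integrable_mult_indicator[OF _ model_int] by (intro Bochner_Integration.integral_add) auto
  also have "\<dots> = (\<integral>\<omega>. indicator {\<omega>\<in>space M. S \<omega> \<and> A \<omega> = j} \<omega> * (Y \<omega> / piS (XP \<omega>, j)) * p (XP \<omega>, XS \<omega>) \<partial>M)
                 + (\<integral>\<omega>. indicator {\<omega>\<in>space M. S \<omega> \<and> A \<omega> \<noteq> j} \<omega> * (Y \<omega> / piS (XP \<omega>, j)) * p (XP \<omega>, XS \<omega>) \<partial>M)"
    by (intro arg_cong2[where f="(+)"] Bochner_Integration.integral_cong)
       (auto simp: w_model_def split: split_indicator)
  finally show ?thesis .
qed

end

theorem corollary1:
  fixes M :: "'a measure" and MP :: "'p measure" and MS :: "'s measure"
    and Y :: "'a \<Rightarrow> real" and S :: "'a \<Rightarrow> bool" and A :: "'a \<Rightarrow> nat"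
    and XP :: "'a \<Rightarrow> 'p" and XS :: "'a \<Rightarrow> 's"
    and J j :: nat
    and piS :: "'p \<times> nat \<Rightarrow> real" and p :: "'p \<times> 's \<Rightarrow> real"
  assumes "prob_space M"
    and Y_meas: "Y \<in> borel_measurable M" and Y_int: "integrable M Y"
    and S_meas: "S \<in> measurable M (count_space UNIV)"
    and A_meas: "A \<in> measurable M (count_space UNIV)"
    and A_range: "\<forall>\<omega>\<in>space M. A \<omega> \<in> {1..J}"
    and XP_meas: "XP \<in> measurable M MP"
    and XS_meas: "XS \<in> measurable M MS"
    and j: "j \<in> {1..J}" and Aj_pos: "measure M {\<omega>\<in>space M. A \<omega> = j} > 0"
    \<comment> \<open>sampling ignorability\<close>
    and samp_ci: "cond_indep M Y borel S (count_space UNIV)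
                    (\<lambda>\<omega>. (XP \<omega>, A \<omega>)) (MP \<Otimes>\<^sub>M count_space UNIV)"
    \<comment> \<open>area ignorability (in the subpopulation S = 1)\<close>
    and area_ci: "cond_indep (uniform_measure M {\<omega>\<in>space M. S \<omega>}) Y borel A (count_space UNIV)
                    (\<lambda>\<omega>. (XP \<omega>, XS \<omega>)) (MP \<Otimes>\<^sub>M MS)"
    \<comment> \<open>piS is a version of Pr(S=1 | XP, A)\<close>
    and piS_meas: "piS \<in> borel_measurable (MP \<Otimes>\<^sub>M count_space UNIV)"
    and piS_cond: "\<forall>C\<in>sets (MP \<Otimes>\<^sub>M count_space UNIV).
        measure M {\<omega>\<in>space M. S \<omega> \<and> (XP \<omega>, A \<omega>) \<in> C}
        = (\<integral>\<omega>. piS (XP \<omega>, A \<omega>) * indicator C (XP \<omega>, A \<omega>) \<partial>M)"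
    and piS_pos: "\<forall>xp\<in>space MP. \<forall>a\<in>{1..J}. 0 < piS (xp, a) \<and> piS (xp, a) < 1"
    \<comment> \<open>p is a version of Pr(A=j | XP, XS, S=1)\<close>
    and p_meas: "p \<in> borel_measurable (MP \<Otimes>\<^sub>M MS)"
    and p_cond: "\<forall>C\<in>sets (MP \<Otimes>\<^sub>M MS).
        measure M {\<omega>\<in>space M. S \<omega> \<and> A \<omega> = j \<and> (XP \<omega>, XS \<omega>) \<in> C}
        = (\<integral>\<omega>. indicator {\<omega>\<in>space M. S \<omega>} \<omega> * p (XP \<omega>, XS \<omega>)
                 * indicator C (XP \<omega>, XS \<omega>) \<partial>M)"
    and p_pos: "\<forall>z\<in>space (MP \<Otimes>\<^sub>M MS). 0 < p z \<and> p z < 1"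
  shows "(\<integral>\<omega>. Y \<omega> * indicator {\<omega>\<in>space M. A \<omega> = j} \<omega> \<partial>M)
           / measure M {\<omega>\<in>space M. A \<omega> = j}
         = (\<integral>\<omega>. indicator {\<omega>\<in>space M. S \<omega> \<and> A \<omega> = j} \<omega>
                   / measure M {\<omega>\<in>space M. A \<omega> = j}
                 * (Y \<omega> / piS (XP \<omega>, j)) * p (XP \<omega>, XS \<omega>) \<partial>M)
         + (\<integral>\<omega>. indicator {\<omega>\<in>space M. S \<omega> \<and> A \<omega> \<noteq> j} \<omega>
                   / measure M {\<omega>\<in>space M. A \<omega> = j}
                 * (p (XP \<omega>, XS \<omega>) / (1 - p (XP \<omega>, XS \<omega>)))
                 * (Y \<omega> / piS (XP \<omega>, j)) * (1 - p (XP \<omega>, XS \<omega>)) \<partial>M)"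
proof -
  interpret sampling_and_area_ignorability M MP MS Y S A XP XS J j piS p
    using assms by (simp add: sampling_and_area_ignorability_def sampling_and_area_ignorability_axioms_def)
  let ?c = "measure M {\<omega>\<in>space M. A \<omega> = j}"
  have "(\<integral>\<omega>. indicator {\<omega>\<in>space M. S \<omega> \<and> A \<omega> = j} \<omega> / ?c
            * (Y \<omega> / piS (XP \<omega>, j)) * p (XP \<omega>, XS \<omega>) \<partial>M)
      = (\<integral>\<omega>. indicator {\<omega>\<in>space M. S \<omega> \<and> A \<omega> = j} \<omega> * (Y \<omega> / piS (XP \<omega>, j)) * p (XP \<omega>, XS \<omega>) \<partial>M) / ?c"
    unfolding integral_divide_zero[symmetric] by (rule Bochner_Integration.integral_cong) simp_all
  moreover have "(\<integral>\<omega>. indicator {\<omega>\<in>space M. S \<omega> \<and> A \<omega> \<noteq> j} \<omega> / ?c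
            * (p (XP \<omega>, XS \<omega>) / (1 - p (XP \<omega>, XS \<omega>)))
            * (Y \<omega> / piS (XP \<omega>, j)) * (1 - p (XP \<omega>, XS \<omega>)) \<partial>M)
      = (\<integral>\<omega>. indicator {\<omega>\<in>space M. S \<omega> \<and> A \<omega> \<noteq> j} \<omega> * (Y \<omega> / piS (XP \<omega>, j)) * p (XP \<omega>, XS \<omega>) \<partial>M) / ?c"
    unfolding integral_divide_zero[symmetric]
    by (rule Bochner_Integration.integral_cong)
       (use p_bounds in \<open>auto simp: mult_odds_mult_complement less_imp_neq mult_ac\<close>)
  ultimately show ?thesis
    using area_mean_reweighting by (simp add: add_divide_distrib)
qed

end
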